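(* Let $\{m_k:k\ge0\}$ be any sequence of positive reals with $\sum_k m_k=\infty$ and $m_k\to0$; let $S_0=0$ and $S_{k+1}=\sum_{i=0}^k m_i$. Define $f_j:(S_j,S_{j+1}]\to\mathbb{R}$, $j\ge0$, recursively with $c_0=0$ and $c_j=f_{j-1}(S_j)$ for $j\ge1$, by $$f_j(x)=\begin{cases}-x+S_j+c_j & x\in(S_j,S_j+\tfrac{m_j}{16})\\ \tfrac{8}{m_j}(x-S_j-\tfrac{m_j}{8})^2-\tfrac{3m_j}{32}+c_j & x\in[S_j+\tfrac{m_j}{16},S_j+\tfrac{3m_j}{16})\\ -\tfrac{5m_j}{16}\exp\!\big(\tfrac{5m_j/16}{x-S_j-m_j/2}+1\big)+\tfrac{m_j}{4}+c_j & x\in[S_j+\tfrac{3m_j}{16},S_j+\tfrac{m_j}{2})\\ \tfrac{m_j}{4}+c_j & x=S_j+\tfrac{m_j}{2}\\ \tfrac{5m_j}{16}\exp\!\big(\tfrac{-5m_j/16}{x-S_j-m_j/2}+1\big)+\tfrac{m_j}{4}+c_j & x\in(S_j+\tfrac{m_j}{2},S_j+\tfrac{13m_j}{16})\\ -\tfrac{8}{m_j}(x-S_j-\tfrac{7m_j}{8})^2+\tfrac{19m_j}{32}+c_j & x\in[S_j+\tfrac{13m_j}{16},S_j+\tfrac{15m_j}{16})\\ -x+S_j+\tfrac{3m_j}{2}+c_j & x\in[S_j+\tfrac{15m_j}{16},S_{j+1}],\end{cases}$$ and define $F:\mathbb{R}\to\mathbb{R}$ by $F(x)=-x$ for $x\le0$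 and $F(x)=f_j(x)$ for $x\in(S_j,S_{j+1}]$. Let $x_0=0$ and $x_{k+1}=x_k-M_k\dot F(x_k)$ with $M_k=m_kI$ (here $p=1$) for $k\ge0$. Then $\{M_k\}$ consists of symmetric positive definite matrices with $\sum_k\lambda_{\min}(M_k)=\infty$ and $\lambda_{\max}(M_k)\to0$. Moreover, (a) $\lim_k x_k=\infty$, (b) $\lim_k F(x_k)=\infty$, and (c) $\lim_k|\dot F(x_k)|=1$.
   Context: $\dot F$ denotes the derivative of $F$; $\lambda_{\min},\lambda_{\max}$ denote smallest and largest eigenvalues. *)

theory Defs
  imports "HOL-Analysis.Analysis"
begin

definition Ssum :: "(nat \<Rightarrow> real) \<Rightarrow> nat \<Rightarrow> real" where
  "Ssum m k = (\<Sum>i<k. m i)"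

text \<open>The piece f_j, with parameters mj = m_j, Sj = S_j, cj = c_j; meant on (S_j, S_j + m_j].\<close>
definition fpiece :: "real \<Rightarrow> real \<Rightarrow> real \<Rightarrow> real \<Rightarrow> real" where
  "fpiece mj Sj cj x =
    (if x < Sj + mj/16 then - x + Sj + cj
     else if x < Sj + 3*mj/16 then (8/mj) * (x - Sj - mj/8)^2 - 3*mj/32 + cj
     else if x < Sj + mj/2 then
       - (5*mj/16) * exp ((5*mj/16) / (x - Sj - mj/2) + 1) + mj/4 + cj
     else if x = Sj + mj/2 then mj/4 + cj
     else if x < Sj + 13*mj/16 then
       (5*mj/16) * exp ((- 5*mj/16) / (x - Sj - mj/2) + 1) + mj/4 + cj
     else if x < Sj + 15*mj/16 then - (8/mj) * (x - Sj - 7*mj/8)^2 + 19*mj/32 + cj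
     else - x + Sj + 3*mj/2 + cj)"

primrec cconst :: "(nat \<Rightarrow> real) \<Rightarrow> nat \<Rightarrow> real" where
  "cconst m 0 = 0"
| "cconst m (Suc j) = fpiece (m j) (Ssum m j) (cconst m j) (Ssum m (Suc j))"

definition fj :: "(nat \<Rightarrow> real) \<Rightarrow> nat \<Rightarrow> real \<Rightarrow> real" where
  "fj m j x = fpiece (m j) (Ssum m j) (cconst m j) x"

definition Ffun :: "(nat \<Rightarrow> real) \<Rightarrow> real \<Rightarrow> real" where
  "Ffun m x = (if x \<le> 0 then - x
     else fj m (THE j. Ssum m j < x \<and> x \<le> Ssum m (Suc j)) x)"

text \<open>Iteration x_0 = 0, x_{k+1} = x_k - M_k F'(x_k), with M_k = m_k I (p = 1).\<close>
primrec xseq :: "(nat \<Rightarrow> real) \<Rightarrow> (real \<Rightarrow> real) \<Rightarrow> nat \<Rightarrow> real" where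
  "xseq m F 0 = 0"
| "xseq m F (Suc k) = xseq m F k - m k * deriv F (xseq m F k)"

definition Mmat :: "(nat \<Rightarrow> real) \<Rightarrow> nat \<Rightarrow> real^1^1" where
  "Mmat m k = mat (m k)"

definition eigvals :: "real^'n^'n \<Rightarrow> real set" where
  "eigvals A = {l. \<exists>v. v \<noteq> 0 \<and> A *v v = l *\<^sub>R v}"

definition lambda_min :: "real^'n^'n \<Rightarrow> real" where
  "lambda_min A = Inf (eigvals A)"

definition lambda_max :: "real^'n^'n \<Rightarrow> real" where
  "lambda_max A = Sup (eigvals A)"

definition sym_pos_def :: "real^'n^'n \<Rightarrow> bool" where
  "sym_pos_def A \<longleftrightarrow> transpose A = A \<and> (\<forall>v. v \<noteq> 0 \<longrightarrow> v \<bullet> (A *v v) > 0)"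

end

theory Submission
  imports Defs
begin

text \<open>
  Near every breakpoint \<open>S\<^sub>k\<close> the function \<open>F\<close> is the line \<open>y \<mapsto> 3 S\<^sub>k / 2 - y\<close>:
  the last linear part of \<open>f\<^sub>k\<^sub>-\<^sub>1\<close> glues to the first linear part of \<open>f\<^sub>k\<close>,
  because \<open>c\<^sub>k = S\<^sub>k / 2\<close>. So \<open>F'(S\<^sub>k) = -1\<close>, the step from \<open>S\<^sub>k\<close> is exactly
  \<open>m\<^sub>k\<close>, and by induction \<open>x\<^sub>k = S\<^sub>k\<close>: the iterates never meet the curved parts.
  Hence \<open>F(x\<^sub>k) = S\<^sub>k / 2\<close> and \<open>|F'(x\<^sub>k)| = 1\<close>, and everything follows from
  \<open>S\<^sub>k \<rightarrow> \<infinity>\<close>. For \<open>p = 1\<close> the matrix \<open>M\<^sub>k = m\<^sub>k I\<close> has the single eigenvalue \<open>m\<^sub>k\<close>.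
\<close>

lemma mat_mult_vector: "(mat c :: real^'n^'n) *v v = c *\<^sub>R v"
  by (simp add: matrix_scaleR[symmetric] linear_scale_self matrix_works)

lemma eigvals_mat: "eigvals (mat c :: real^'n^'n) = {c}"
proof -
  have "l = c" if "v \<noteq> 0" "c *\<^sub>R v = l *\<^sub>R v" for l and v :: "real^'n"
    using that by simp
  moreover have "(1::real^'n) \<noteq> 0" by simp
  ultimately show ?thesis
    unfolding eigvals_def mat_mult_vector by blast
qed

lemma lambda_min_mat: "lambda_min (mat c :: real^'n^'n) = c"
  by (simp add: lambda_min_def eigvals_mat)

lemma lambda_max_mat: "lambda_max (mat c :: real^'n^'n) = c"
  by (simp add: lambda_max_def eigvals_mat)

lemma sym_pos_def_mat: "c > 0 \<Longrightarrow> sym_pos_def (mat c :: real^'n^'n)"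
  by (simp add: sym_pos_def_def mat_mult_vector)

lemma Ssum_0 [simp]: "Ssum m 0 = 0"
  by (simp add: Ssum_def)

lemma Ssum_Suc [simp]: "Ssum m (Suc k) = Ssum m k + m k"
  by (simp add: Ssum_def)

lemma fpiece_initial: "x < Sj + mj/16 \<Longrightarrow> fpiece mj Sj cj x = Sj + cj - x"
  by (simp add: fpiece_def)

lemma fpiece_final: "mj > 0 \<Longrightarrow> Sj + 15*mj/16 \<le> x \<Longrightarrow> fpiece mj Sj cj x = Sj + 3*mj/2 + cj - x"
  by (simp add: fpiece_def)

locale positive_steps =
  fixes m :: "nat \<Rightarrow> real"
  assumes pos: "m k > 0"
begin

lemma Ssum_nonneg: "Ssum m k \<ge> 0"
  unfolding Ssum_def by (simp add: less_imp_le pos sum_nonneg)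

lemma strict_mono_Ssum: "strict_mono (Ssum m)"
  by (simp add: strict_mono_Suc_iff pos)

lemma cconst_eq_half_Ssum: "cconst m k = Ssum m k / 2"
  by (induction k) (simp_all add: fpiece_final pos)

lemma Ffun_eq_fpiece:
  assumes x: "Ssum m j < x" "x \<le> Ssum m (Suc j)"
  shows "Ffun m x = fpiece (m j) (Ssum m j) (Ssum m j / 2) x"
proof -
  have "(THE j. Ssum m j < x \<and> x \<le> Ssum m (Suc j)) = j"
  proof (rule the_equality)
    fix i assume "Ssum m i < x \<and> x \<le> Ssum m (Suc i)"
    with x have "i < Suc j" "j < Suc i"
      using strict_mono_less[OF strict_mono_Ssum] by (metis order.strict_trans2)+
    then show "i = j" by simp
  qed (use x in simp)
  moreover have "x > 0" using x Ssum_nonneg[of j] by simp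
  ultimately show ?thesis
    by (simp add: Ffun_def fj_def cconst_eq_half_Ssum)
qed

lemma Ffun_linear_near_Ssum:
  "eventually (\<lambda>y. Ffun m y = 3/2 * Ssum m k - y) (nhds (Ssum m k))"
proof -
  have right: "eventually (\<lambda>y. Ffun m y = 3/2 * Ssum m k - y) (at_right (Ssum m k))"
  proof -
    have "Ffun m y = 3/2 * Ssum m k - y" if "y \<in> {Ssum m k<..<Ssum m k + m k/16}" for y
      using that pos[of k] by (simp add: Ffun_eq_fpiece[of k] fpiece_initial)
    then show ?thesis
      using eventually_at_right_real[of "Ssum m k" "Ssum m k + m k/16"] pos[of k]
      by (auto elim: eventually_mono)
  qed
  have left: "eventually (\<lambda>y. Ffun m y = 3/2 * Ssum m k - y) (at_left (Ssum m k))"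
  proof (cases k)
    case 0
    have "eventually (\<lambda>y. y \<in> {-1<..<0}) (at_left (0::real))"
      by (rule eventually_at_left_real) simp
    then show ?thesis
      by (auto simp: 0 Ffun_def elim!: eventually_mono)
  next
    case (Suc j)
    have "Ffun m y = 3/2 * Ssum m k - y" if "y \<in> {Ssum m k - m j/16<..<Ssum m k}" for y
      using that pos[of j] Suc by (simp add: Ffun_eq_fpiece[of j] fpiece_final)
    then show ?thesis
      using eventually_at_left_real[of "Ssum m k - m j/16" "Ssum m k"] pos[of j]
      by (auto elim: eventually_mono)
  qed
  have "Ffun m (Ssum m k) = Ssum m k / 2"
  proof (cases k)
    case 0
    then show ?thesis by (simp add: Ffun_def)
  next
    case (Suc j)
    then show ?thesis using pos[of j] by (simp add: Ffun_eq_fpiece[of j] fpiece_final)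
  qed
  with left right show ?thesis
    by (simp add: eventually_nhds_conv_at eventually_at_split)
qed

lemma Ffun_Ssum: "Ffun m (Ssum m k) = Ssum m k / 2"
  using eventually_nhds_x_imp_x[OF Ffun_linear_near_Ssum] by simp

lemma deriv_Ffun_Ssum: "deriv (Ffun m) (Ssum m k) = -1"
proof -
  have "deriv (Ffun m) (Ssum m k) = deriv (\<lambda>y. 3/2 * Ssum m k - y) (Ssum m k)"
    by (rule deriv_cong_ev[OF Ffun_linear_near_Ssum refl])
  also have "\<dots> = -1"
    by (rule DERIV_imp_deriv) (auto intro!: derivative_eq_intros)
  finally show ?thesis .
qed

lemma xseq_Ffun_eq_Ssum: "xseq m (Ffun m) k = Ssum m k"
  by (induction k) (simp_all add: deriv_Ffun_Ssum)

end

theorem proposition5p4: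
  fixes m :: "nat \<Rightarrow> real"
  assumes pos: "\<And>k. m k > 0"
    and div: "filterlim (\<lambda>n. \<Sum>k<n. m k) at_top sequentially"
    and lim0: "m \<longlonglongrightarrow> 0"
  shows "(\<forall>k. sym_pos_def (Mmat m k))
       \<and> filterlim (\<lambda>n. \<Sum>k<n. lambda_min (Mmat m k)) at_top sequentially
       \<and> (\<lambda>k. lambda_max (Mmat m k)) \<longlonglongrightarrow> 0
       \<and> filterlim (xseq m (Ffun m)) at_top sequentially
       \<and> filterlim (\<lambda>k. Ffun m (xseq m (Ffun m) k)) at_top sequentially
       \<and> (\<lambda>k. \<bar>deriv (Ffun m) (xseq m (Ffun m) k)\<bar>) \<longlonglongrightarrow> 1"
proof -
  interpret positive_steps m
    using pos by unfold_locales
  have S: "filterlim (Ssum m) at_top sequentially"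
    using div by (simp add: Ssum_def [abs_def])
  have half_S: "filterlim (\<lambda>k. Ssum m k / 2) at_top sequentially"
    using filterlim_at_top_mult_tendsto_pos[OF tendsto_const[of "1/2"] _ S] by simp
  have x_eq_S: "xseq m (Ffun m) = Ssum m"
    by (rule ext) (rule xseq_Ffun_eq_Ssum)
  show ?thesis
  proof (intro conjI allI)
    show "sym_pos_def (Mmat m k)" for k
      by (simp add: Mmat_def sym_pos_def_mat pos)
    show "filterlim (\<lambda>n. \<Sum>k<n. lambda_min (Mmat m k)) at_top sequentially"
      using div by (simp add: Mmat_def lambda_min_mat)
    show "(\<lambda>k. lambda_max (Mmat m k)) \<longlonglongrightarrow> 0"
      using lim0 by (simp add: Mmat_def lambda_max_mat)
    show "filterlim (xseq m (Ffun m)) at_top sequentially"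
      using S by (simp add: x_eq_S)
    show "filterlim (\<lambda>k. Ffun m (xseq m (Ffun m) k)) at_top sequentially"
      using half_S by (simp add: x_eq_S Ffun_Ssum)
    show "(\<lambda>k. \<bar>deriv (Ffun m) (xseq m (Ffun m) k)\<bar>) \<longlonglongrightarrow> 1"
      by (simp add: x_eq_S deriv_Ffun_Ssum)
  qed
qed

end
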